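(* Let $k\geq 1$, let $G$ be a connected graph, and let $e=(u,v)\in E(G)$ be a bridge of $G$. Suppose there is a maximum $k$-edge-colorable subgraph $H_k$ of $G$ with $e\in E(H_k)$. Let $G_1,G_2$ be the two components of $G-e$, and let $G_1e$, $G_2e$ be the graphs obtained from $G_1$, $G_2$ respectively by adding the edge $e$ together with its endpoint not in the component (so $E(G_ie)=E(G_i)\cup\{e\}$). Then $\nu_{k}(G)=\nu_{k}(G_{1}e)+\nu_{k}(G_{2}e)-1$.
   Context: Graphs are finite, without loops, possibly with multiple edges. $\nu_k(G)$ is the maximum number of edges of a $k$-edge-colorable subgraph of $G$; a maximum $k$-edge-colorable subgraph is one attaining $\nu_k(G)$ edges. A bridge is an edge whose removal increases the number of connected components. *)

theory Defs
  imports Main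
begin

text \<open>Parallel edges are distinct identifiers with the same endpoints.\<close>

definition multigraph :: "'v set \<Rightarrow> 'e set \<Rightarrow> ('e \<Rightarrow> 'v set) \<Rightarrow> bool" where
  "multigraph V E ends \<longleftrightarrow> finite V \<and> finite E \<and>
     (\<forall>e\<in>E. ends e \<subseteq> V \<and> card (ends e) = 2)"

definition k_edge_colorable :: "nat \<Rightarrow> ('e \<Rightarrow> 'v set) \<Rightarrow> 'e set \<Rightarrow> bool" where
  "k_edge_colorable k ends F \<longleftrightarrow>
     (\<exists>c :: 'e \<Rightarrow> nat. (\<forall>e\<in>F. c e < k) \<and>
        (\<forall>e\<in>F. \<forall>f\<in>F. e \<noteq> f \<and> ends e \<inter> ends f \<noteq> {} \<longrightarrow> c e \<noteq> c f))"

definition nu :: "nat \<Rightarrow> 'e set \<Rightarrow> ('e \<Rightarrow> 'v set) \<Rightarrow> nat" where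
  "nu k E ends = Max {card F | F. F \<subseteq> E \<and> k_edge_colorable k ends F}"

definition max_k_col_subgraph :: "nat \<Rightarrow> 'e set \<Rightarrow> ('e \<Rightarrow> 'v set) \<Rightarrow> 'e set \<Rightarrow> bool" where
  "max_k_col_subgraph k E ends H \<longleftrightarrow>
     H \<subseteq> E \<and> k_edge_colorable k ends H \<and> card H = nu k E ends"

definition adj_rel :: "'e set \<Rightarrow> ('e \<Rightarrow> 'v set) \<Rightarrow> ('v \<times> 'v) set" where
  "adj_rel E ends = {(x, y). \<exists>e\<in>E. ends e = {x, y}}"

definition components :: "'v set \<Rightarrow> 'e set \<Rightarrow> ('e \<Rightarrow> 'v set) \<Rightarrow> 'v set set" where
  "components V E ends = V // {(x, y). x \<in> V \<and> y \<in> V \<and> (x, y) \<in> (adj_rel E ends)\<^sup>*}"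

definition connected_graph :: "'v set \<Rightarrow> 'e set \<Rightarrow> ('e \<Rightarrow> 'v set) \<Rightarrow> bool" where
  "connected_graph V E ends \<longleftrightarrow> card (components V E ends) = 1"

definition bridge :: "'v set \<Rightarrow> 'e set \<Rightarrow> ('e \<Rightarrow> 'v set) \<Rightarrow> 'e \<Rightarrow> bool" where
  "bridge V E ends e \<longleftrightarrow> e \<in> E \<and>
     card (components V (E - {e}) ends) > card (components V E ends)"

definition comp_edges :: "'e set \<Rightarrow> ('e \<Rightarrow> 'v set) \<Rightarrow> 'e \<Rightarrow> 'v set \<Rightarrow> 'e set" where
  "comp_edges E ends e C = {f \<in> E - {e}. ends f \<subseteq> C}"

end

theory Submission
  imports Defs
begin

text \<open>Let \<open>E\<^sub>1, E\<^sub>2\<close> be the edge sets of the two sides of the bridge \<open>e\<close>. Edges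
  of different sides never touch, so colourings of the two sides can be glued once
  their colours at \<open>e\<close> are made to agree by a swap of two colours. Gluing a maximum
  colourable subgraph of \<open>E\<^sub>1 + e\<close> with \<open>H \<inter> E\<^sub>2\<close> (plus \<open>e\<close> if needed) shows by
  maximality of \<open>H\<close> that \<open>\<nu>\<^sub>k(E\<^sub>1 + e) = |H \<inter> E\<^sub>1| + 1\<close>, and symmetrically for \<open>E\<^sub>2\<close>;
  the theorem follows from \<open>|H| = |H \<inter> E\<^sub>1| + |H \<inter> E\<^sub>2| + 1\<close>.\<close>

definition proper_edge_coloring :: "nat \<Rightarrow> ('e \<Rightarrow> 'v set) \<Rightarrow> 'e set \<Rightarrow> ('e \<Rightarrow> nat) \<Rightarrow> bool" where
  "proper_edge_coloring k ends F c \<longleftrightarrow>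
     (\<forall>f\<in>F. c f < k) \<and> (\<forall>f\<in>F. \<forall>g\<in>F. f \<noteq> g \<and> ends f \<inter> ends g \<noteq> {} \<longrightarrow> c f \<noteq> c g)"

lemma k_edge_colorable_iff_proper:
  "k_edge_colorable k ends F \<longleftrightarrow> (\<exists>c. proper_edge_coloring k ends F c)"
  unfolding k_edge_colorable_def proper_edge_coloring_def by blast

lemma k_edge_colorable_subset:
  "k_edge_colorable k ends F \<Longrightarrow> G \<subseteq> F \<Longrightarrow> k_edge_colorable k ends G"
  unfolding k_edge_colorable_def by blast

lemma card_le_nu:
  assumes "finite E" "F \<subseteq> E" "k_edge_colorable k ends F"
  shows "card F \<le> nu k E ends"
  unfolding nu_def using assms by (intro Max_ge) auto

lemma nu_attained:
  assumes "finite E"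
  obtains F where "F \<subseteq> E" "k_edge_colorable k ends F" "card F = nu k E ends"
proof -
  have "k_edge_colorable k ends {}" unfolding k_edge_colorable_def by auto
  then have "{card F | F. F \<subseteq> E \<and> k_edge_colorable k ends F} \<noteq> {}" by blast
  from Max_in[OF _ this] assms show ?thesis using that unfolding nu_def by auto
qed

lemma proper_edge_coloring_swap:
  assumes c: "proper_edge_coloring k ends F c" and "e \<in> F" "j < k"
  obtains c' where "proper_edge_coloring k ends F c'" "c' e = j"
proof
  define i where "i = c e"
  define c' where "c' x = (if c x = i then j else if c x = j then i else c x)" for x
  have "i < k" using c \<open>e \<in> F\<close> unfolding i_def proper_edge_coloring_def by auto
  then have "\<forall>f\<in>F. c' f < k" using c \<open>j < k\<close> unfolding proper_edge_coloring_def c'_def by auto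
  moreover have "c' x = c' y \<Longrightarrow> c x = c y" for x y unfolding c'_def by (auto split: if_splits)
  ultimately show "proper_edge_coloring k ends F c'"
    using c unfolding proper_edge_coloring_def by blast
  show "c' e = j" unfolding c'_def i_def by simp
qed

lemma k_edge_colorable_glue:
  assumes A: "A \<subseteq> insert e E1" "k_edge_colorable k ends A"
    and B: "B \<subseteq> insert e E2" "k_edge_colorable k ends B"
    and dis: "E1 \<inter> E2 = {}" and sep: "\<forall>f\<in>E1. \<forall>g\<in>E2. ends f \<inter> ends g = {}"
    and e_iff: "e \<in> A \<longleftrightarrow> e \<in> B"
  shows "k_edge_colorable k ends (A \<union> B)"
proof -
  obtain cA where cA: "proper_edge_coloring k ends A cA"
    using A(2) k_edge_colorable_iff_proper by blast
  obtain cB where cB: "proper_edge_coloring k ends B cB" and agree: "e \<in> A \<Longrightarrow> cB e = cA e"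
  proof (cases "e \<in> A")
    case True
    obtain c0 where "proper_edge_coloring k ends B c0"
      using B(2) k_edge_colorable_iff_proper by blast
    moreover have "cA e < k" using cA True unfolding proper_edge_coloring_def by blast
    ultimately show ?thesis using proper_edge_coloring_swap True e_iff that by metis
  next
    case False
    then show ?thesis using B(2) k_edge_colorable_iff_proper that by blast
  qed
  define c where "c x = (if x \<in> A then cA x else cB x)" for x
  have "A \<inter> B \<subseteq> {e}" using A(1) B(1) dis by auto
  then have c_on_A: "\<forall>f\<in>A. c f = cA f" and c_on_B: "\<forall>f\<in>B. c f = cB f"
    using agree unfolding c_def by auto
  have "A - B \<subseteq> E1" "B - A \<subseteq> E2" using A(1) B(1) e_iff by auto
  then have "\<forall>f\<in>A - B. \<forall>g\<in>B - A. ends f \<inter> ends g = {}" using sep by blast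
  then have "proper_edge_coloring k ends (A \<union> B) c"
    using cA cB c_on_A c_on_B unfolding proper_edge_coloring_def
    by (metis (no_types, lifting) DiffI Int_commute Un_iff)
  then show ?thesis using k_edge_colorable_iff_proper by blast
qed

lemma card_split_at_edge:
  assumes "finite E" "H \<subseteq> E" "e \<in> H" "E - {e} = E1 \<union> E2" "E1 \<inter> E2 = {}"
  shows "card H = card (H \<inter> E1) + card (H \<inter> E2) + 1"
proof -
  have fin: "finite (H \<inter> E1)" "finite (H \<inter> E2)" using assms(1,2) finite_subset by blast+
  have "H = insert e ((H \<inter> E1) \<union> (H \<inter> E2))" "e \<notin> (H \<inter> E1) \<union> (H \<inter> E2)"
    using assms(2-4) by auto
  then have "card H = Suc (card ((H \<inter> E1) \<union> (H \<inter> E2)))"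
    using fin by (metis card_insert_disjoint finite_UnI)
  also have "\<dots> = card (H \<inter> E1) + card (H \<inter> E2) + 1"
    using card_Un_disjoint[OF fin] assms(5) by auto
  finally show ?thesis .
qed

lemma nu_bridge_side:
  assumes fin: "finite E" and H: "max_k_col_subgraph k E ends H" and "e \<in> H"
    and split: "E - {e} = E1 \<union> E2" and dis: "E1 \<inter> E2 = {}"
    and sep: "\<forall>f\<in>E1. \<forall>g\<in>E2. ends f \<inter> ends g = {}"
  shows "nu k (insert e E1) ends = card (H \<inter> E1) + 1"
proof -
  have HE: "H \<subseteq> E" and colH: "k_edge_colorable k ends H" and cardH: "card H = nu k E ends"
    using H unfolding max_k_col_subgraph_def by auto
  have sub: "insert e E1 \<subseteq> E" using split HE \<open>e \<in> H\<close> by blast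
  have fin1: "finite (insert e E1)" using finite_subset[OF sub fin] .
  have "e \<notin> E1" "e \<notin> E2" using split by blast+
  have "card (insert e (H \<inter> E1)) \<le> nu k (insert e E1) ends"
    using \<open>e \<in> H\<close> by (intro card_le_nu[OF fin1] k_edge_colorable_subset[OF colH]) auto
  then have lower: "card (H \<inter> E1) + 1 \<le> nu k (insert e E1) ends"
    using fin1 \<open>e \<notin> E1\<close> by simp
  obtain F1 where F1: "F1 \<subseteq> insert e E1" "k_edge_colorable k ends F1"
      "card F1 = nu k (insert e E1) ends"
    using nu_attained[OF fin1] by blast
  define F2 where "F2 = (if e \<in> F1 then insert e (H \<inter> E2) else H \<inter> E2)"
  have "k_edge_colorable k ends (F1 \<union> F2)"
    unfolding F2_def using \<open>e \<in> H\<close> \<open>e \<notin> E2\<close>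
    by (intro k_edge_colorable_glue[OF F1(1,2) _ _ dis sep] k_edge_colorable_subset[OF colH]) auto
  moreover have "F1 \<union> F2 = F1 \<union> (H \<inter> E2)" unfolding F2_def by auto
  moreover have "F1 \<union> (H \<inter> E2) \<subseteq> E" using F1(1) sub HE by auto
  ultimately have "card (F1 \<union> (H \<inter> E2)) \<le> card H"
    using card_le_nu[OF fin] cardH by metis
  moreover have "card (F1 \<union> (H \<inter> E2)) = card F1 + card (H \<inter> E2)"
    using F1(1) dis \<open>e \<notin> E2\<close> fin1 fin HE by (intro card_Un_disjoint) (auto intro: finite_subset)
  moreover have "card H = card (H \<inter> E1) + card (H \<inter> E2) + 1"
    using card_split_at_edge[OF fin HE \<open>e \<in> H\<close> split dis] .
  ultimately show ?thesis using F1(3) lower by linarith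
qed

lemma equiv_reachability:
  "equiv V {(x, y). x \<in> V \<and> y \<in> V \<and> (x, y) \<in> (adj_rel E ends)\<^sup>*}"
proof (rule equivI)
  have "sym (adj_rel E ends)" unfolding adj_rel_def sym_def by (auto simp: insert_commute)
  then show "sym {(x, y). x \<in> V \<and> y \<in> V \<and> (x, y) \<in> (adj_rel E ends)\<^sup>*}"
    using sym_rtrancl unfolding sym_def by blast
qed (auto simp: refl_on_def trans_def intro: rtrancl_trans)

lemma edge_in_component:
  assumes "multigraph V E ends" "f \<in> E" "C \<in> components V E ends" "ends f \<inter> C \<noteq> {}"
  shows "ends f \<subseteq> C"
proof
  let ?R = "{(x, y). x \<in> V \<and> y \<in> V \<and> (x, y) \<in> (adj_rel E ends)\<^sup>*}"
  obtain x y where xy: "ends f = {x, y}" and ends_V: "ends f \<subseteq> V"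
    using assms(1,2) unfolding multigraph_def by (meson card_2_iff)
  have "(x, y) \<in> adj_rel E ends" "(y, x) \<in> adj_rel E ends"
    using assms(2) xy unfolding adj_rel_def by (auto simp: insert_commute)
  then have R_ends: "(a, b) \<in> ?R" if "a \<in> ends f" "b \<in> ends f" for a b
    using that ends_V xy by auto
  have C: "C \<in> V // ?R" using assms(3) unfolding components_def .
  obtain z where z: "z \<in> ends f" "z \<in> C" using assms(4) by blast
  fix w assume "w \<in> ends f"
  then show "w \<in> C" by (rule in_quotient_imp_closed[OF equiv_reachability C z(2) R_ends[OF z(1)]])
qed

lemma two_components_split_edges:
  assumes "multigraph V E ends" "components V (E - {e}) ends = {C1, C2}" "C1 \<noteq> C2"
  shows "E - {e} = comp_edges E ends e C1 \<union> comp_edges E ends e C2"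
    and "comp_edges E ends e C1 \<inter> comp_edges E ends e C2 = {}"
    and "\<forall>f\<in>comp_edges E ends e C1. \<forall>g\<in>comp_edges E ends e C2. ends f \<inter> ends g = {}"
proof -
  let ?R = "{(x, y). x \<in> V \<and> y \<in> V \<and> (x, y) \<in> (adj_rel (E - {e}) ends)\<^sup>*}"
  have mg: "multigraph V (E - {e}) ends" using assms(1) unfolding multigraph_def by auto
  have quot: "V // ?R = {C1, C2}" using assms(2) unfolding components_def .
  have eq: "equiv V ?R" by (rule equiv_reachability)
  have disC: "C1 \<inter> C2 = {}" using quotient_disj[OF eq] quot assms(3) by blast
  have "C1 \<union> C2 = V" using Union_quotient[OF eq] quot by simp
  moreover have ends_ne: "ends f \<noteq> {}" and "ends f \<subseteq> V" if "f \<in> E" for f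
    using assms(1) that unfolding multigraph_def by fastforce+
  ultimately have "ends f \<subseteq> C1 \<or> ends f \<subseteq> C2" if "f \<in> E - {e}" for f
    using edge_in_component[OF mg that] assms(2) that by blast
  then show "E - {e} = comp_edges E ends e C1 \<union> comp_edges E ends e C2"
    and "comp_edges E ends e C1 \<inter> comp_edges E ends e C2 = {}"
    and "\<forall>f\<in>comp_edges E ends e C1. \<forall>g\<in>comp_edges E ends e C2. ends f \<inter> ends g = {}"
    using disC ends_ne unfolding comp_edges_def by blast+
qed

theorem lemma7:
  fixes V :: "'v set" and E :: "'e set" and ends :: "'e \<Rightarrow> 'v set"
    and k :: nat and e :: 'e and u v :: 'v and H :: "'e set" and C1 C2 :: "'v set"
  assumes "k \<ge> 1"
    and "multigraph V E ends"
    and "connected_graph V E ends"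
    and "bridge V E ends e"
    and "ends e = {u, v}"
    and "max_k_col_subgraph k E ends H"
    and "e \<in> H"
    and "components V (E - {e}) ends = {C1, C2}"
    and "C1 \<noteq> C2"
  shows "int (nu k E ends) =
           int (nu k (comp_edges E ends e C1 \<union> {e}) ends)
         + int (nu k (comp_edges E ends e C2 \<union> {e}) ends) - 1"
proof -
  define E1 where "E1 = comp_edges E ends e C1"
  define E2 where "E2 = comp_edges E ends e C2"
  have fin: "finite E" using assms(2) unfolding multigraph_def by blast
  have split: "E - {e} = E1 \<union> E2" and dis: "E1 \<inter> E2 = {}"
    and sep: "\<forall>f\<in>E1. \<forall>g\<in>E2. ends f \<inter> ends g = {}"
    using two_components_split_edges[OF assms(2,8,9)] unfolding E1_def E2_def by auto
  have "nu k (insert e E1) ends = card (H \<inter> E1) + 1"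
    using nu_bridge_side[OF fin assms(6,7) split dis sep] .
  moreover have "nu k (insert e E2) ends = card (H \<inter> E2) + 1"
    using nu_bridge_side[OF fin assms(6,7), of E2 E1] split dis sep by (simp add: Un_commute Int_commute, blast)
  moreover have "card H = card (H \<inter> E1) + card (H \<inter> E2) + 1"
    using assms(6,7) card_split_at_edge[OF fin _ _ split dis]
    unfolding max_k_col_subgraph_def by blast
  moreover have "card H = nu k E ends"
    using assms(6) unfolding max_k_col_subgraph_def by blast
  ultimately show ?thesis unfolding E1_def E2_def by simp
qed

end
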